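(* Let $n\ge2$, $d\ge1$, $k\ge1$, $V\in\mathcal{C}^{k+1}(\mathbb{R}^d,\mathbb{R})$ and $u_0\in\mathbb{R}^d$. Let $u$ be the unique solution of $\ddot u(r)=-\frac{n-1}{r}\dot u(r)+\nabla V(u(r))$ such that $(u(r),\dot u(r))\to(u_0,0)$ as $r\to0^+$, assume it is defined on $(0,+\infty)$, and still denote by $u$ its continuous extension to $[0,+\infty)$. If $u$ is not identically equal to $u_0$ (equivalently, $u_0$ is not a critical point of $V$), then there exists $r_{\mathrm{once}}>0$ such that: (1) $\dot u(r)\neq0$ for every $r\in(0,r_{\mathrm{once}})$; (2) for every $r^*\in[0,r_{\mathrm{once}})$ and every $r\in[0,+\infty)$, $u(r)=u(r^* )$ implies $r=r^*$. *)

theory Defs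
  imports "HOL-Analysis.Analysis"
begin

fun Ck :: "nat \<Rightarrow> ('a::euclidean_space \<Rightarrow> 'b::real_normed_vector) \<Rightarrow> bool" where
  "Ck 0 f = continuous_on UNIV f"
| "Ck (Suc m) f = ((\<forall>x. f differentiable (at x)) \<and>
      (\<forall>i\<in>Basis. Ck m (\<lambda>x. frechet_derivative f (at x) i)))"

definition grad :: "('a::euclidean_space \<Rightarrow> real) \<Rightarrow> 'a \<Rightarrow> 'a" where
  "grad V x = (\<Sum>i\<in>Basis. frechet_derivative V (at x) i *\<^sub>R i)"

end

theory Submission
  imports Defs
begin

(* Write n = N + 1, so that for r > 0 the equation reads (r^N u')' = r^N grad V(u).
   If grad V(u0) = 0, let T be the last radius up to which u = u0. Integrating twice from T
   bounds the supremum W of |u - u0| on (T, T + h] by L h^2 W, with L a Lipschitz constant of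
   grad V at u0, so W = 0 for small h: u never leaves u0. Hence grad V(u0) is nonzero.
   Then u'(r)/r tends to c = grad V(u0)/n, so on some (0, delta] the velocity has positive
   inner product with c and length comparable to |c| r. The first fact makes <u, c> strictly
   increasing, so u is injective on [0, delta]. Beyond delta, the energy |u'|^2/2 - V(u) is
   nonincreasing, and its dissipation (N/r)|u'|^2 on (0, delta] already pushes the energy at
   delta strictly below -V(u(t)) for all t < delta/2; since -V(u(r)) <= energy(r) <= energy(delta)
   for r >= delta, u(r) cannot equal u(t). *)

lemma norm_diff_right_limit_le_derivative_bound:
  fixes F :: "real \<Rightarrow> 'a::real_normed_vector"
  assumes "a < s"
    and deriv: "\<And>x. a < x \<Longrightarrow> x \<le> s \<Longrightarrow> (F has_vector_derivative F' x) (at x)"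
    and bound: "\<And>x. a < x \<Longrightarrow> x < s \<Longrightarrow> norm (F' x) \<le> B"
    and lim: "(F \<longlongrightarrow> l) (at_right a)"
  shows "norm (F s - l) \<le> B * (s - a)"
proof -
  have mvt: "norm (F s - F t) - B * (s - t) \<le> 0" if "a < t" "t < s" for t
  proof -
    have "continuous_on {t..s} F"
      using that
      by (auto intro!: continuous_at_imp_continuous_on has_vector_derivative_continuous[OF deriv])
    then have "norm (F s - F t) \<le> B * s - B * t"
      by (rule differentiable_bound_general[OF \<open>t < s\<close> _ _ _ _ bound, of _ "\<lambda>x. B * x"])
        (use that deriv in \<open>auto intro!: continuous_intros derivative_eq_intros\<close>)
    then show ?thesis by (simp add: algebra_simps)
  qed
  have "((\<lambda>t. norm (F s - F t) - B * (s - t)) \<longlongrightarrow> norm (F s - l) - B * (s - a)) (at_right a)"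
    by (intro tendsto_intros lim)
  moreover have "eventually (\<lambda>t. norm (F s - F t) - B * (s - t) \<le> 0) (at_right a)"
    unfolding eventually_at_right_field using \<open>a < s\<close> mvt by (intro exI[of _ s]) auto
  ultimately have "norm (F s - l) - B * (s - a) \<le> 0"
    by (rule tendsto_upperbound) (simp add: trivial_limit_at_right_real)
  then show ?thesis by simp
qed

lemma norm_le_of_weighted_derivative_bound:
  fixes D f :: "real \<Rightarrow> 'a::real_normed_vector"
  assumes "0 \<le> a" "a < s"
    and deriv: "\<And>x. a < x \<Longrightarrow> x \<le> s \<Longrightarrow> ((\<lambda>x. x ^ N *\<^sub>R D x) has_vector_derivative x ^ N *\<^sub>R f x) (at x)"
    and bound: "\<And>x. a < x \<Longrightarrow> x < s \<Longrightarrow> norm (f x) \<le> M"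
    and lim: "((\<lambda>x. x ^ N *\<^sub>R D x) \<longlongrightarrow> 0) (at_right a)"
  shows "norm (D s) \<le> M * (s - a)"
proof -
  have weighted_bound: "norm (x ^ N *\<^sub>R f x) \<le> s ^ N * M" if "a < x" "x < s" for x
    using that \<open>0 \<le> a\<close> bound[OF that]
    by (auto intro!: mult_mono power_mono order_trans[OF norm_ge_zero bound[OF that]])
  have "norm (s ^ N *\<^sub>R D s - 0) \<le> s ^ N * M * (s - a)"
    by (rule norm_diff_right_limit_le_derivative_bound[OF \<open>a < s\<close> deriv weighted_bound lim])
  then have "s ^ N * norm (D s) \<le> s ^ N * (M * (s - a))"
    using assms(1,2) by (simp add: mult_ac)
  then show ?thesis
    using assms(1,2) by (simp add: mult_le_cancel_left)
qed

lemma differentiable_imp_local_Lipschitz_bound: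
  assumes "f differentiable (at x)"
  obtains L \<rho> where "L > 0" "\<rho> > 0"
    "\<And>y. norm (y - x) \<le> \<rho> \<Longrightarrow> norm (f y - f x) \<le> L * norm (y - x)"
proof -
  obtain f' where "(f has_derivative f') (at x)"
    using assms unfolding differentiable_def by blast
  then have "bounded_linear f'" and
    approx: "\<forall>e>0. \<exists>d>0. \<forall>y. norm (y - x) < d \<longrightarrow> norm (f y - f x - f' (y - x)) \<le> e * norm (y - x)"
    unfolding has_derivative_at_alt by auto
  obtain K where K: "K > 0" "\<And>h. norm (f' h) \<le> norm h * K"
    using bounded_linear.pos_bounded[OF \<open>bounded_linear f'\<close>] by blast
  obtain d where d: "d > 0" "\<And>y. norm (y - x) < d \<Longrightarrow> norm (f y - f x - f' (y - x)) \<le> norm (y - x)"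
    using approx[rule_format, of 1] by auto
  have "norm (f y - f x) \<le> (K + 1) * norm (y - x)" if "norm (y - x) \<le> d / 2" for y
  proof -
    have "norm (f y - f x - f' (y - x)) \<le> norm (y - x)"
      using that d by simp
    moreover have "norm (f y - f x) \<le> norm (f y - f x - f' (y - x)) + norm (f' (y - x))"
      by (metis diff_add_cancel norm_triangle_ineq)
    ultimately show ?thesis
      using K(2)[of "y - x"] by (simp add: algebra_simps)
  qed
  then show thesis
    using K d by (intro that[of "K + 1" "d / 2"]) auto
qed

lemma eq_at_if_isCont_and_eq_on_left:
  fixes f :: "real \<Rightarrow> 'a::t2_space"
  assumes "isCont f T" "a < T" "\<And>s. a < s \<Longrightarrow> s < T \<Longrightarrow> f s = y"
  shows "f T = y"
proof -
  have "(f \<longlongrightarrow> y) (at_left T)"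
    using assms(2,3) by (intro tendsto_eventually) (auto simp: eventually_at_left_field intro!: exI[of _ a])
  moreover have "(f \<longlongrightarrow> f T) (at_left T)"
    using assms(1) by (simp add: continuous_at filterlim_at_split)
  ultimately show ?thesis
    using tendsto_unique[OF trivial_limit_at_left_real] by blast
qed

lemma inj_on_if_inner_derivative_pos:
  fixes u du :: "real \<Rightarrow> 'a::real_inner"
  assumes "continuous_on {a..b} u"
    and "\<And>r. a < r \<Longrightarrow> r < b \<Longrightarrow> (u has_vector_derivative du r) (at r)"
    and "\<And>r. a < r \<Longrightarrow> r < b \<Longrightarrow> du r \<bullet> c > 0"
  shows "inj_on u {a..b}"
proof -
  have "u s \<bullet> c < u t \<bullet> c" if "a \<le> s" "s < t" "t \<le> b" for s t
  proof (rule DERIV_pos_imp_increasing_open[OF \<open>s < t\<close>])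
    fix r assume "s < r" "r < t"
    then have "((\<lambda>r. u r \<bullet> c) has_real_derivative du r \<bullet> c) (at r)"
      using that assms(2)
      by (auto simp: has_real_derivative_iff_has_vector_derivative
          intro!: bounded_linear.has_vector_derivative[OF bounded_linear_inner_left])
    then show "\<exists>y. ((\<lambda>r. u r \<bullet> c) has_real_derivative y) (at r) \<and> y > 0"
      using that \<open>s < r\<close> \<open>r < t\<close> assms(3) by auto
  next
    show "continuous_on {s..t} (\<lambda>r. u r \<bullet> c)"
      using that by (intro continuous_intros continuous_on_subset[OF assms(1)]) auto
  qed
  then show ?thesis
    unfolding inj_on_def by (metis atLeastAtMost_iff less_irrefl linorder_neqE_linordered_idom)
qed

lemma inner_pos_and_norm_bounds_if_close:
  fixes x c :: "'a::real_inner"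
  assumes close: "norm (x - c) \<le> norm c / 4" and "c \<noteq> 0"
  shows "0 < x \<bullet> c" "3 / 4 * norm c \<le> norm x" "norm x \<le> 5 / 4 * norm c"
proof -
  have "\<bar>(x - c) \<bullet> c\<bar> \<le> norm c / 4 * norm c"
    using Cauchy_Schwarz_ineq2[of "x - c" c] mult_right_mono[OF close norm_ge_zero[of c]] by linarith
  moreover have "x \<bullet> c = norm c * norm c + (x - c) \<bullet> c"
    by (simp add: inner_diff_left dot_square_norm power2_eq_square)
  moreover have "0 < norm c * norm c"
    using \<open>c \<noteq> 0\<close> by simp
  ultimately show "0 < x \<bullet> c"
    by linarith
  show "3 / 4 * norm c \<le> norm x" "norm x \<le> 5 / 4 * norm c"
    using norm_triangle_ineq2[of x c] norm_triangle_ineq3[of x c] close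
    by (auto simp: norm_minus_commute)
qed

lemma frechet_derivative_eq_inner_grad:
  assumes "V differentiable (at x)"
  shows "frechet_derivative V (at x) h = grad V x \<bullet> h"
proof -
  have "frechet_derivative V (at x) h = frechet_derivative V (at x) (\<Sum>i\<in>Basis. (h \<bullet> i) *\<^sub>R i)"
    by (simp add: euclidean_representation)
  also have "\<dots> = (\<Sum>i\<in>Basis. (h \<bullet> i) * frechet_derivative V (at x) i)"
    using linear_frechet_derivative[OF assms] by (simp add: linear_sum linear_scale)
  also have "\<dots> = grad V x \<bullet> h"
    by (simp add: grad_def inner_commute[of _ h] inner_sum_right mult.commute)
  finally show ?thesis .
qed

lemma has_real_derivative_comp_grad:
  assumes "V differentiable (at (u s))" "(u has_vector_derivative du) (at s)"
  shows "((\<lambda>s. V (u s)) has_real_derivative grad V (u s) \<bullet> du) (at s)"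
proof -
  have "((V \<circ> u) has_derivative frechet_derivative V (at (u s)) \<circ> (\<lambda>h. h *\<^sub>R du)) (at s)"
    using assms by (intro diff_chain_at)
      (auto simp: has_vector_derivative_def frechet_derivative_works[symmetric])
  moreover have "frechet_derivative V (at (u s)) \<circ> (\<lambda>h. h *\<^sub>R du) = (\<lambda>h. (grad V (u s) \<bullet> du) * h)"
    using assms(1) by (simp add: fun_eq_iff frechet_derivative_eq_inner_grad)
  ultimately show ?thesis
    by (simp add: has_field_derivative_def comp_def)
qed

lemma Ck_Suc_Suc_imp_grad_differentiable:
  "Ck (Suc (Suc m)) V \<Longrightarrow> grad V differentiable (at x)"
  unfolding grad_def[abs_def]
  by (intro differentiable_sum differentiable_scaleR ballI) auto

section \<open>The radial equation\<close>

(* The radial form of the equation Laplacian u = g(u) on R^(N+1). *)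
locale radial_ode =
  fixes N :: nat
    and g :: "'a::real_normed_vector \<Rightarrow> 'a"
    and u du :: "real \<Rightarrow> 'a"
  assumes u_deriv: "\<And>r. 0 < r \<Longrightarrow> (u has_vector_derivative du r) (at r)"
    and du_deriv: "\<And>r. 0 < r \<Longrightarrow> (du has_vector_derivative (- real N / r) *\<^sub>R du r + g (u r)) (at r)"
begin

lemma weighted_du_deriv:
  assumes "0 < r"
  shows "((\<lambda>r. r ^ N *\<^sub>R du r) has_vector_derivative r ^ N *\<^sub>R g (u r)) (at r)"
proof -
  have "((\<lambda>r. r ^ N *\<^sub>R du r) has_vector_derivative
      r ^ N *\<^sub>R ((- real N / r) *\<^sub>R du r + g (u r)) + (real N * r ^ (N - 1)) *\<^sub>R du r) (at r)"
    using DERIV_pow[of N r] by (intro has_vector_derivative_scaleR du_deriv assms) simp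
  moreover have "r ^ N * (- real N / r) + real N * r ^ (N - 1) = 0"
    using assms by (cases N) (simp_all add: field_simps)
  ultimately show ?thesis
    by (simp add: algebra_simps)
qed

lemma u_continuous_on_nonneg:
  assumes "(u \<longlongrightarrow> u 0) (at_right 0)"
  shows "continuous_on {0..} u"
proof -
  have "continuous (at r within {0..}) u" if "0 \<le> r" for r
  proof (cases "r = 0")
    case True
    then show ?thesis
      using assms by (simp add: continuous_within at_within_Ici_at_right)
  next
    case False
    then show ?thesis
      using that by (simp add: continuous_at_imp_continuous_within has_vector_derivative_continuous[OF u_deriv])
  qed
  then show ?thesis
    by (simp add: continuous_on_eq_continuous_within)
qed

lemma displacement_bound:
  assumes "0 \<le> a" "a < s"
    and u_lim: "(u \<longlongrightarrow> u0) (at_right a)"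
    and du_lim: "((\<lambda>r. r ^ N *\<^sub>R du r) \<longlongrightarrow> 0) (at_right a)"
    and g_bound: "\<And>x. a < x \<Longrightarrow> x < s \<Longrightarrow> norm (g (u x)) \<le> M"
  shows "norm (u s - u0) \<le> M * (s - a) * (s - a)"
proof -
  have du_bound: "norm (du x) \<le> M * (s - a)" if "a < x" "x < s" for x
  proof -
    have "norm (du x) \<le> M * (x - a)"
      using that assms(1) g_bound du_lim weighted_du_deriv
      by (intro norm_le_of_weighted_derivative_bound[of a x N du "\<lambda>x. g (u x)"]) auto
    also have "\<dots> \<le> M * (s - a)"
      using that order_trans[OF norm_ge_zero g_bound[OF that]] by (intro mult_left_mono) auto
    finally show ?thesis .
  qed
  show ?thesis
    using \<open>a < s\<close> assms(1) u_deriv du_bound u_lim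
    by (intro norm_diff_right_limit_le_derivative_bound) auto
qed

(* With W the supremum of |u - u0| on (a, a + h], two integrations give W <= L h^2 W <= W / 2. *)
lemma const_on_right_nbhd:
  assumes "0 \<le> a" "0 < L" "0 < \<rho>"
    and g_Lipschitz: "\<And>y. norm (y - u0) \<le> \<rho> \<Longrightarrow> norm (g y) \<le> L * norm (y - u0)"
    and u_lim: "(u \<longlongrightarrow> u0) (at_right a)"
    and du_lim: "((\<lambda>r. r ^ N *\<^sub>R du r) \<longlongrightarrow> 0) (at_right a)"
  obtains h where "0 < h" "\<And>s. a < s \<Longrightarrow> s \<le> a + h \<Longrightarrow> u s = u0"
proof -
  obtain b where "a < b" and u_close: "\<And>s. a < s \<Longrightarrow> s < b \<Longrightarrow> norm (u s - u0) \<le> \<rho>"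
    using tendstoD[OF u_lim \<open>0 < \<rho>\<close>]
    unfolding eventually_at_right_field dist_norm by (metis less_imp_le)
  define h where "h = min ((b - a) / 2) (min 1 (1 / (2 * L)))"
  have "0 < h"
    using \<open>a < b\<close> \<open>0 < L\<close> by (simp add: h_def)
  have "h \<le> (b - a) / 2" "h \<le> 1" "h \<le> 1 / (2 * L)"
    unfolding h_def by (rule min.cobounded1, simp_all add: min.coboundedI2)
  then have "a + h < b" "L * h \<le> 1 / 2"
    using \<open>0 < L\<close> \<open>0 < h\<close> by (simp_all add: field_simps)
  then have contraction: "L * h * h \<le> 1 / 2"
    using mult_mono[of "L * h" "1 / 2" h 1] \<open>0 < h\<close> \<open>h \<le> 1\<close> by simp
  define I where "I = {a<..a + h}"
  define W where "W = (SUP s\<in>I. norm (u s - u0))"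
  have "bdd_above ((\<lambda>s. norm (u s - u0)) ` I)"
    using u_close \<open>a + h < b\<close> by (intro bdd_aboveI[of _ \<rho>]) (auto simp: I_def)
  then have W_upper: "norm (u s - u0) \<le> W" if "s \<in> I" for s
    unfolding W_def using that by (rule cSUP_upper2) simp
  have "0 \<le> W"
    using W_upper[of "a + h"] \<open>0 < h\<close> by (auto simp: I_def intro: order_trans[OF norm_ge_zero])
  have "norm (u s - u0) \<le> W / 2" if "s \<in> I" for s
  proof -
    have "norm (g (u x)) \<le> L * W" if "a < x" "x < s" for x
    proof -
      have "x \<in> I"
        using that \<open>s \<in> I\<close> by (auto simp: I_def)
      then have "norm (g (u x)) \<le> L * norm (u x - u0)"
        using \<open>a + h < b\<close> by (intro g_Lipschitz u_close) (auto simp: I_def)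
      also have "\<dots> \<le> L * W"
        using W_upper[OF \<open>x \<in> I\<close>] \<open>0 < L\<close> by simp
      finally show ?thesis .
    qed
    then have "norm (u s - u0) \<le> L * W * (s - a) * (s - a)"
      using that assms(1) u_lim du_lim by (intro displacement_bound) (auto simp: I_def)
    also have "\<dots> \<le> L * W * h * h"
      using that \<open>0 < L\<close> \<open>0 \<le> W\<close> by (intro mult_mono) (auto simp: I_def)
    also have "\<dots> \<le> W / 2"
      using mult_left_mono[OF contraction \<open>0 \<le> W\<close>] by (simp add: mult_ac)
    finally show ?thesis .
  qed
  then have "W \<le> W / 2"
    unfolding W_def using \<open>0 < h\<close> by (intro cSUP_least) (auto simp: I_def)
  then have "W = 0"
    using \<open>0 \<le> W\<close> by simp
  then show thesis
    using W_upper \<open>0 < h\<close> by (intro that) (auto simp: I_def)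
qed

lemma at_rest_if_const_before:
  assumes "0 < T" and const: "\<And>s. 0 < s \<Longrightarrow> s < T \<Longrightarrow> u s = u0"
  shows "u T = u0" "(u \<longlongrightarrow> u0) (at_right T)" "((\<lambda>r. r ^ N *\<^sub>R du r) \<longlongrightarrow> 0) (at_right T)"
proof -
  have u_cont: "isCont u T"
    using u_deriv[OF \<open>0 < T\<close>] by (rule has_vector_derivative_continuous)
  have du_cont: "isCont du T"
    using du_deriv[OF \<open>0 < T\<close>] by (rule has_vector_derivative_continuous)
  show "u T = u0"
    using eq_at_if_isCont_and_eq_on_left[OF u_cont \<open>0 < T\<close> const] .
  have du_zero: "du s = 0" if "0 < s" "s < T" for s
  proof -
    have "((\<lambda>_. u0) has_vector_derivative 0) (at s)"
      by simp
    then have "(u has_vector_derivative 0) (at s)"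
      by (rule has_vector_derivative_transform_within_open[where S = "{0<..<T}"])
        (use that const in auto)
    then show ?thesis
      using u_deriv[OF \<open>0 < s\<close>] vector_derivative_unique_at by blast
  qed
  have "du T = 0"
    using eq_at_if_isCont_and_eq_on_left[OF du_cont \<open>0 < T\<close> du_zero] .
  show "(u \<longlongrightarrow> u0) (at_right T)"
    using u_cont \<open>u T = u0\<close> by (simp add: isCont_def filterlim_at_split)
  have "((\<lambda>r. r ^ N *\<^sub>R du r) \<longlongrightarrow> T ^ N *\<^sub>R du T) (at T)"
    using du_cont unfolding isCont_def by (intro tendsto_intros)
  then show "((\<lambda>r. r ^ N *\<^sub>R du r) \<longlongrightarrow> 0) (at_right T)"
    using \<open>du T = 0\<close> by (simp add: filterlim_at_split)
qed

lemma const_extends_right: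
  assumes "0 < L" "0 < \<rho>"
    and g_Lipschitz: "\<And>y. norm (y - u0) \<le> \<rho> \<Longrightarrow> norm (g y) \<le> L * norm (y - u0)"
    and "u 0 = u0" "(u \<longlongrightarrow> u0) (at_right 0)" "(du \<longlongrightarrow> 0) (at_right 0)"
    and "0 \<le> T" and const: "\<And>s. 0 \<le> s \<Longrightarrow> s < T \<Longrightarrow> u s = u0"
  obtains h where "0 < h" "\<And>s. 0 \<le> s \<Longrightarrow> s \<le> T + h \<Longrightarrow> u s = u0"
proof -
  have "u T = u0 \<and> (u \<longlongrightarrow> u0) (at_right T) \<and> ((\<lambda>r. r ^ N *\<^sub>R du r) \<longlongrightarrow> 0) (at_right T)"
  proof (cases "T = 0")
    case True
    have "((\<lambda>r. r ^ N *\<^sub>R du r) \<longlongrightarrow> 0 ^ N *\<^sub>R 0) (at_right 0)"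
      using assms(6) by (intro tendsto_intros)
    then show ?thesis
      using True assms(4,5) by simp
  next
    case False
    then have "0 < T"
      using \<open>0 \<le> T\<close> by simp
    then show ?thesis
      using at_rest_if_const_before[OF \<open>0 < T\<close>, of u0] const by simp
  qed
  then have "u T = u0"
    and rest_T: "(u \<longlongrightarrow> u0) (at_right T)" "((\<lambda>r. r ^ N *\<^sub>R du r) \<longlongrightarrow> 0) (at_right T)"
    by simp_all
  obtain h where "0 < h" and after_T: "\<And>s. T < s \<Longrightarrow> s \<le> T + h \<Longrightarrow> u s = u0"
    using const_on_right_nbhd[OF \<open>0 \<le> T\<close> \<open>0 < L\<close> \<open>0 < \<rho>\<close> g_Lipschitz rest_T] by blast
  show thesis
  proof (rule that[OF \<open>0 < h\<close>])
    fix s assume "0 \<le> s" "s \<le> T + h"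
    consider "s < T" | "s = T" | "T < s"
      by linarith
    then show "u s = u0"
      using const[OF \<open>0 \<le> s\<close>] \<open>u T = u0\<close> after_T[OF _ \<open>s \<le> T + h\<close>] by cases simp_all
  qed
qed

lemma const_if_equilibrium:
  assumes "g u0 = 0" "g differentiable (at u0)"
    and "u 0 = u0" "(u \<longlongrightarrow> u0) (at_right 0)" "(du \<longlongrightarrow> 0) (at_right 0)"
    and "0 \<le> r"
  shows "u r = u0"
proof (rule ccontr)
  assume "u r \<noteq> u0"
  obtain L \<rho> where "0 < L" "0 < \<rho>"
    and g_Lipschitz: "\<And>y. norm (y - u0) \<le> \<rho> \<Longrightarrow> norm (g y) \<le> L * norm (y - u0)"
    using differentiable_imp_local_Lipschitz_bound[OF assms(2)] unfolding assms(1) by auto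
  define moving where "moving = {r. 0 \<le> r \<and> u r \<noteq> u0}"
  have "moving \<noteq> {}"
    using \<open>0 \<le> r\<close> \<open>u r \<noteq> u0\<close> by (auto simp: moving_def)
  define T where "T = Inf moving"
  have "0 \<le> T"
    unfolding T_def using \<open>moving \<noteq> {}\<close> by (intro cInf_greatest) (auto simp: moving_def)
  have "u s = u0" if "0 \<le> s" "s < T" for s
  proof (rule ccontr)
    assume "u s \<noteq> u0"
    then have "T \<le> s"
      unfolding T_def using \<open>0 \<le> s\<close> by (intro cInf_lower) (auto simp: moving_def)
    then show False
      using \<open>s < T\<close> by simp
  qed
  then obtain h where "0 < h" and const: "\<And>s. 0 \<le> s \<Longrightarrow> s \<le> T + h \<Longrightarrow> u s = u0"
    using const_extends_right[OF \<open>0 < L\<close> \<open>0 < \<rho>\<close> g_Lipschitz assms(3-5) \<open>0 \<le> T\<close>] by blast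
  have "T + h \<le> Inf moving"
  proof (rule cInf_greatest[OF \<open>moving \<noteq> {}\<close>])
    fix s assume "s \<in> moving"
    then show "T + h \<le> s"
      using const[of s] by (cases "s \<le> T + h") (auto simp: moving_def)
  qed
  then show False
    using \<open>0 < h\<close> by (simp add: T_def)
qed

lemma du_over_r_tendsto:
  assumes "isCont g u0" "(u \<longlongrightarrow> u0) (at_right 0)" "(du \<longlongrightarrow> 0) (at_right 0)"
  shows "((\<lambda>r. du r /\<^sub>R r) \<longlongrightarrow> g u0 /\<^sub>R real (Suc N)) (at_right 0)"
proof (rule tendstoI)
  fix \<epsilon> :: real assume "0 < \<epsilon>"
  define c where "c = g u0 /\<^sub>R real (Suc N)"
  have "((\<lambda>r. g (u r)) \<longlongrightarrow> g u0) (at_right 0)"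
    using isCont_tendsto_compose[OF assms(1,2)] .
  from tendstoD[OF this, of "\<epsilon> / 2"] \<open>0 < \<epsilon>\<close>
  obtain b where "0 < b" and g_close: "\<And>s. 0 < s \<Longrightarrow> s < b \<Longrightarrow> norm (g (u s) - g u0) \<le> \<epsilon> / 2"
    unfolding eventually_at_right_field dist_norm by (auto intro: less_imp_le)
  have deriv: "((\<lambda>x. x ^ N *\<^sub>R (du x - x *\<^sub>R c)) has_vector_derivative x ^ N *\<^sub>R (g (u x) - g u0)) (at x)"
    if "0 < x" for x
  proof -
    have "((\<lambda>x. x ^ Suc N / real (Suc N)) has_real_derivative x ^ N) (at x)"
      using DERIV_cdivide[OF DERIV_pow[of "Suc N" x UNIV], of "real (Suc N)"] by simp
    from has_vector_derivative_scaleR[OF this has_vector_derivative_const[of "g u0"]]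
    have "((\<lambda>x. (x ^ Suc N / real (Suc N)) *\<^sub>R g u0) has_vector_derivative x ^ N *\<^sub>R g u0) (at x)"
      by simp
    then have "((\<lambda>x. x ^ N *\<^sub>R du x - (x ^ Suc N / real (Suc N)) *\<^sub>R g u0) has_vector_derivative
        x ^ N *\<^sub>R g (u x) - x ^ N *\<^sub>R g u0) (at x)"
      by (intro has_vector_derivative_diff weighted_du_deriv that)
    moreover have "(\<lambda>x. x ^ N *\<^sub>R du x - (x ^ Suc N / real (Suc N)) *\<^sub>R g u0) = (\<lambda>x. x ^ N *\<^sub>R (du x - x *\<^sub>R c))"
      by (simp add: fun_eq_iff c_def algebra_simps divide_inverse)
    ultimately show ?thesis
      by (simp add: scaleR_diff_right)
  qed
  have lim: "((\<lambda>x. x ^ N *\<^sub>R (du x - x *\<^sub>R c)) \<longlongrightarrow> 0 ^ N *\<^sub>R (0 - 0 *\<^sub>R c)) (at_right 0)"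
    using assms(3) by (intro tendsto_intros)
  have "norm (du r /\<^sub>R r - c) < \<epsilon>" if "0 < r" "r < b" for r
  proof -
    have "norm (du r - r *\<^sub>R c) \<le> \<epsilon> / 2 * (r - 0)"
      using that g_close deriv lim
      by (intro norm_le_of_weighted_derivative_bound[of 0 r N _ "\<lambda>x. g (u x) - g u0"]) auto
    moreover have "du r /\<^sub>R r - c = (1 / r) *\<^sub>R (du r - r *\<^sub>R c)"
      using that by (simp add: scaleR_diff_right divide_inverse_commute)
    ultimately show ?thesis
      using that mult_pos_pos[OF \<open>0 < \<epsilon>\<close> \<open>0 < r\<close>] by (simp add: pos_divide_less_eq)
  qed
  then show "eventually (\<lambda>r. dist (du r /\<^sub>R r) c < \<epsilon>) (at_right 0)"
    unfolding eventually_at_right_field dist_norm using \<open>0 < b\<close> by blast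
qed

end

section \<open>Energy in the gradient case\<close>

locale radial_gradient_ode = radial_ode N "grad V" u du
  for N :: nat and V :: "'a::euclidean_space \<Rightarrow> real" and u du :: "real \<Rightarrow> 'a" +
  assumes V_differentiable: "\<And>x. V differentiable (at x)"
begin

definition energy :: "real \<Rightarrow> real" where
  "energy r = (norm (du r))\<^sup>2 / 2 - V (u r)"

lemma energy_deriv:
  assumes "0 < r"
  shows "(energy has_real_derivative - (real N / r) * (norm (du r))\<^sup>2) (at r)"
proof -
  define ddu where "ddu = (- real N / r) *\<^sub>R du r + grad V (u r)"
  have "((\<lambda>s. du s \<bullet> du s) has_real_derivative du r \<bullet> ddu + ddu \<bullet> du r) (at r)"
    unfolding has_real_derivative_iff_has_vector_derivative ddu_def
    using bounded_bilinear.has_vector_derivative[OF bounded_bilinear_inner du_deriv[OF assms] du_deriv[OF assms]] .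
  moreover have "((\<lambda>s. V (u s)) has_real_derivative grad V (u r) \<bullet> du r) (at r)"
    using V_differentiable u_deriv[OF assms] by (rule has_real_derivative_comp_grad)
  ultimately have "(energy has_real_derivative (du r \<bullet> ddu + ddu \<bullet> du r) / 2 - grad V (u r) \<bullet> du r) (at r)"
    unfolding energy_def[abs_def] power2_norm_eq_inner by (rule DERIV_diff[OF DERIV_cdivide])
  moreover have "(du r \<bullet> ddu + ddu \<bullet> du r) / 2 - grad V (u r) \<bullet> du r = - (real N / r) * (norm (du r))\<^sup>2"
    by (simp add: ddu_def inner_add_right inner_diff_right inner_commute power2_norm_eq_inner diff_divide_distrib)
  ultimately show ?thesis
    by simp
qed

lemma energy_dissipation:
  assumes "0 < t" "t \<le> \<delta>" "0 \<le> \<beta>"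
    and du_lower: "\<And>z. t \<le> z \<Longrightarrow> z \<le> \<delta> \<Longrightarrow> \<beta> * z \<le> norm (du z)"
  shows "energy \<delta> + real N * \<beta>\<^sup>2 / 2 * (\<delta>\<^sup>2 - t\<^sup>2) \<le> energy t"
proof -
  have "energy \<delta> + real N * \<beta>\<^sup>2 / 2 * \<delta>\<^sup>2 \<le> energy t + real N * \<beta>\<^sup>2 / 2 * t\<^sup>2"
  proof (rule DERIV_nonpos_imp_nonincreasing[OF \<open>t \<le> \<delta>\<close>, of "\<lambda>s. energy s + real N * \<beta>\<^sup>2 / 2 * s\<^sup>2"])
    fix z assume "t \<le> z" "z \<le> \<delta>"
    then have "0 < z"
      using \<open>0 < t\<close> by linarith
    have "(\<beta> * z)\<^sup>2 \<le> (norm (du z))\<^sup>2"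
      using du_lower[OF \<open>t \<le> z\<close> \<open>z \<le> \<delta>\<close>] \<open>0 \<le> \<beta>\<close> \<open>0 < z\<close> by (intro power_mono) auto
    then have "real N / z * (\<beta> * z)\<^sup>2 \<le> real N / z * (norm (du z))\<^sup>2"
      using \<open>0 < z\<close> by (intro mult_left_mono) auto
    moreover have "real N / z * (\<beta> * z)\<^sup>2 = real N * \<beta>\<^sup>2 / 2 * (2 * z)"
      using \<open>0 < z\<close> by (simp add: power2_eq_square)
    ultimately have "- (real N / z) * (norm (du z))\<^sup>2 + real N * \<beta>\<^sup>2 / 2 * (2 * z) \<le> 0"
      by simp
    moreover have "((\<lambda>s. energy s + real N * \<beta>\<^sup>2 / 2 * s\<^sup>2) has_real_derivative
        - (real N / z) * (norm (du z))\<^sup>2 + real N * \<beta>\<^sup>2 / 2 * (2 * z)) (at z)"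
      using energy_deriv[OF \<open>0 < z\<close>] by (auto intro!: derivative_eq_intros)
    ultimately show "\<exists>y. ((\<lambda>s. energy s + real N * \<beta>\<^sup>2 / 2 * s\<^sup>2) has_real_derivative y) (at z) \<and> y \<le> 0"
      by blast
  qed
  then show ?thesis
    by (simp add: right_diff_distrib)
qed

lemma energy_margin:
  assumes "0 < \<delta>" "0 \<le> \<beta>"
    and du_bounds: "\<And>z. 0 < z \<Longrightarrow> z \<le> \<delta> \<Longrightarrow> \<beta> * z \<le> norm (du z) \<and> norm (du z) \<le> \<gamma> * z"
    and "0 < s" "s \<le> \<delta> / 2"
  shows "energy \<delta> + \<delta>\<^sup>2 * (3 * real N * \<beta>\<^sup>2 - \<gamma>\<^sup>2) / 8 \<le> - V (u s)"
proof -
  have "norm (du s) \<le> \<gamma> * s"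
    using du_bounds[of s] assms(1,4,5) by simp
  then have du_s: "(norm (du s))\<^sup>2 \<le> (\<gamma> * s)\<^sup>2"
    by (intro power_mono) auto
  have "(2 * s)\<^sup>2 \<le> \<delta>\<^sup>2"
    using assms(4,5) by (intro power_mono) auto
  then have nonpos: "(\<gamma>\<^sup>2 + real N * \<beta>\<^sup>2) * (4 * s\<^sup>2 - \<delta>\<^sup>2) \<le> 0"
    by (intro mult_nonneg_nonpos) (simp_all add: power_mult_distrib)
  have "energy \<delta> \<le> energy s - real N * \<beta>\<^sup>2 / 2 * (\<delta>\<^sup>2 - s\<^sup>2)"
    using assms du_bounds energy_dissipation[of s \<delta> \<beta>] by simp
  also have "\<dots> \<le> (\<gamma> * s)\<^sup>2 / 2 - V (u s) - real N * \<beta>\<^sup>2 / 2 * (\<delta>\<^sup>2 - s\<^sup>2)"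
    using du_s by (simp add: energy_def)
  also have "\<dots> = - V (u s) - \<delta>\<^sup>2 * (3 * real N * \<beta>\<^sup>2 - \<gamma>\<^sup>2) / 8
      + (\<gamma>\<^sup>2 + real N * \<beta>\<^sup>2) * (4 * s\<^sup>2 - \<delta>\<^sup>2) / 8"
    by (simp add: power_mult_distrib field_simps)
  finally show ?thesis
    using nonpos by simp
qed

lemma energy_lt_potential_near_origin:
  assumes "0 < \<delta>" "0 \<le> \<beta>" "\<gamma>\<^sup>2 < 3 * real N * \<beta>\<^sup>2"
    and du_bounds: "\<And>z. 0 < z \<Longrightarrow> z \<le> \<delta> \<Longrightarrow> \<beta> * z \<le> norm (du z) \<and> norm (du z) \<le> \<gamma> * z"
    and u_cont: "(u \<longlongrightarrow> u 0) (at_right 0)"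
    and "0 \<le> t" "t \<le> \<delta> / 2"
  shows "energy \<delta> < - V (u t)"
proof -
  define \<kappa> where "\<kappa> = \<delta>\<^sup>2 * (3 * real N * \<beta>\<^sup>2 - \<gamma>\<^sup>2) / 8"
  have "0 < \<kappa>"
    using \<open>0 < \<delta>\<close> assms(3) by (simp add: \<kappa>_def)
  have margin: "energy \<delta> + \<kappa> \<le> - V (u s)" if "0 < s" "s \<le> \<delta> / 2" for s
    unfolding \<kappa>_def using assms(1,2) du_bounds that by (rule energy_margin)
  show ?thesis
  proof (cases "t = 0")
    case True
    have "((\<lambda>s. - V (u s)) \<longlongrightarrow> - V (u 0)) (at_right 0)"
      using isCont_tendsto_compose[OF differentiable_imp_continuous_within[OF V_differentiable] u_cont]
      by (intro tendsto_minus)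
    moreover have "eventually (\<lambda>s. energy \<delta> + \<kappa> \<le> - V (u s)) (at_right 0)"
      unfolding eventually_at_right_field using \<open>0 < \<delta>\<close> margin
      by (intro exI[of _ "\<delta> / 2"]) auto
    ultimately have "energy \<delta> + \<kappa> \<le> - V (u 0)"
      by (rule tendsto_lowerbound) (simp add: trivial_limit_at_right_real)
    then show ?thesis
      using True \<open>0 < \<kappa>\<close> by simp
  next
    case False
    then show ?thesis
      using margin[of t] assms(6,7) \<open>0 < \<kappa>\<close> by simp
  qed
qed

lemma not_revisited_beyond:
  assumes "0 < \<delta>" "0 \<le> \<beta>" "\<gamma>\<^sup>2 < 3 * real N * \<beta>\<^sup>2"
    and "\<And>z. 0 < z \<Longrightarrow> z \<le> \<delta> \<Longrightarrow> \<beta> * z \<le> norm (du z) \<and> norm (du z) \<le> \<gamma> * z"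
    and "(u \<longlongrightarrow> u 0) (at_right 0)"
    and "0 \<le> t" "t < \<delta> / 2" "\<delta> < r"
  shows "u r \<noteq> u t"
proof -
  have "- V (u r) \<le> energy r"
    by (simp add: energy_def)
  also have "\<dots> \<le> energy \<delta>"
    using energy_dissipation[of \<delta> r 0] \<open>0 < \<delta>\<close> \<open>\<delta> < r\<close> by simp
  also have "\<dots> < - V (u t)"
    using assms by (intro energy_lt_potential_near_origin) auto
  finally show ?thesis
    by auto
qed

lemma near_origin_bounds:
  assumes "isCont (grad V) u0" "grad V u0 \<noteq> 0"
    and "(u \<longlongrightarrow> u0) (at_right 0)" "(du \<longlongrightarrow> 0) (at_right 0)"
  defines "c \<equiv> grad V u0 /\<^sub>R real (Suc N)"
  obtains \<delta> where "0 < \<delta>"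
    "\<And>r. 0 < r \<Longrightarrow> r \<le> \<delta> \<Longrightarrow>
      0 < du r \<bullet> c \<and> 3 / 4 * norm c * r \<le> norm (du r) \<and> norm (du r) \<le> 5 / 4 * norm c * r"
proof -
  have "c \<noteq> 0"
    using assms(2) by (simp add: c_def)
  then have "eventually (\<lambda>r. dist (du r /\<^sub>R r) c < norm c / 4) (at_right 0)"
    by (intro tendstoD[OF du_over_r_tendsto[OF assms(1,3,4), folded c_def]]) simp
  then obtain b where "0 < b" and close: "\<And>r. 0 < r \<Longrightarrow> r < b \<Longrightarrow> norm (du r /\<^sub>R r - c) \<le> norm c / 4"
    unfolding eventually_at_right_field dist_norm by (auto intro: less_imp_le)
  show thesis
  proof (rule that[of "b / 2"])
    show "0 < b / 2"
      using \<open>0 < b\<close> by simp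
    fix r assume "0 < r" "r \<le> b / 2"
    define x where "x = du r /\<^sub>R r"
    have "norm (x - c) \<le> norm c / 4"
      unfolding x_def using \<open>0 < r\<close> \<open>r \<le> b / 2\<close> \<open>0 < b\<close> by (intro close) auto
    note x_bounds = inner_pos_and_norm_bounds_if_close[OF this \<open>c \<noteq> 0\<close>]
    have "du r = r *\<^sub>R x"
      using \<open>0 < r\<close> by (simp add: x_def)
    then show "0 < du r \<bullet> c \<and> 3 / 4 * norm c * r \<le> norm (du r) \<and> norm (du r) \<le> 5 / 4 * norm c * r"
      using x_bounds mult_right_mono[OF x_bounds(2), of r] mult_right_mono[OF x_bounds(3), of r] \<open>0 < r\<close>
      by (simp add: mult.commute)
  qed
qed

lemma initial_segment_never_revisited:
  assumes "1 \<le> N" "isCont (grad V) u0" "grad V u0 \<noteq> 0"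
    and "u 0 = u0" "(u \<longlongrightarrow> u0) (at_right 0)" "(du \<longlongrightarrow> 0) (at_right 0)"
  shows "\<exists>r_once>0. (\<forall>r\<in>{0<..<r_once}. du r \<noteq> 0) \<and>
           (\<forall>r_star\<in>{0..<r_once}. \<forall>r\<ge>0. u r = u r_star \<longrightarrow> r = r_star)"
proof -
  define c where "c = grad V u0 /\<^sub>R real (Suc N)"
  have "c \<noteq> 0"
    using assms(3) by (simp add: c_def)
  obtain \<delta> where "0 < \<delta>" and near_origin: "\<And>r. 0 < r \<Longrightarrow> r \<le> \<delta> \<Longrightarrow>
      0 < du r \<bullet> c \<and> 3 / 4 * norm c * r \<le> norm (du r) \<and> norm (du r) \<le> 5 / 4 * norm c * r"
    using near_origin_bounds[OF assms(2,3,5,6)] unfolding c_def by blast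
  have "continuous_on {0..} u"
    using assms(4,5) by (intro u_continuous_on_nonneg) simp
  then have "continuous_on {0..\<delta>} u"
    by (rule continuous_on_subset) auto
  then have inj: "inj_on u {0..\<delta>}"
    using u_deriv near_origin by (intro inj_on_if_inner_derivative_pos[where c = c]) auto
  have "(5 / 4 * norm c)\<^sup>2 < 3 * 1 * (3 / 4 * norm c)\<^sup>2"
    using \<open>c \<noteq> 0\<close> by (simp add: power_mult_distrib power_divide)
  also have "\<dots> \<le> 3 * real N * (3 / 4 * norm c)\<^sup>2"
    using \<open>1 \<le> N\<close> by (intro mult_right_mono) auto
  finally have no_return: "u r \<noteq> u t" if "0 \<le> t" "t < \<delta> / 2" "\<delta> < r" for r t
    using \<open>0 < \<delta>\<close> near_origin assms(4,5) that
    by (intro not_revisited_beyond[where \<beta> = "3 / 4 * norm c" and \<gamma> = "5 / 4 * norm c"]) auto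
  show ?thesis
  proof (intro exI[of _ "\<delta> / 2"] conjI ballI allI impI)
    show "0 < \<delta> / 2"
      using \<open>0 < \<delta>\<close> by simp
  next
    fix r assume "r \<in> {0<..<\<delta> / 2}"
    then show "du r \<noteq> 0"
      using near_origin[of r] by auto
  next
    fix r_star r assume r_star: "r_star \<in> {0..<\<delta> / 2}" and "0 \<le> r" "u r = u r_star"
    then have "r \<le> \<delta>"
      using no_return[of r_star r] by (meson atLeastLessThan_iff not_le)
    then show "r = r_star"
      using inj_onD[OF inj \<open>u r = u r_star\<close>] r_star \<open>0 \<le> r\<close> \<open>0 < \<delta>\<close> by simp
  qed
qed

end

theorem lemma2p3:
  fixes n k :: nat
    and V :: "'a::euclidean_space \<Rightarrow> real"
    and u du :: "real \<Rightarrow> 'a"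
    and u0 :: 'a
  assumes "n \<ge> 2" and "k \<ge> 1"
    and "Ck (k + 1) V"
    and "\<forall>r>0. (u has_vector_derivative du r) (at r) \<and>
           (du has_vector_derivative (- (real n - 1) / r) *\<^sub>R du r + grad V (u r)) (at r)"
    and "(u \<longlongrightarrow> u0) (at_right 0)"
    and "(du \<longlongrightarrow> 0) (at_right 0)"
    and "u 0 = u0"
    and "\<exists>r\<ge>0. u r \<noteq> u0"
  shows "\<exists>r_once>0. (\<forall>r\<in>{0<..<r_once}. du r \<noteq> 0) \<and>
           (\<forall>r_star\<in>{0..<r_once}. \<forall>r\<ge>0. u r = u r_star \<longrightarrow> r = r_star)"
proof -
  obtain N where "n = Suc N" "1 \<le> N"
    using assms(1) by (cases n) auto
  have V_C2: "Ck (Suc (Suc (k - 1))) V"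
    using assms(2,3) by simp
  then have V_diff: "\<And>x. V differentiable (at x)"
    by simp
  have grad_diff: "\<And>x. grad V differentiable (at x)"
    using V_C2 by (rule Ck_Suc_Suc_imp_grad_differentiable)
  interpret radial_gradient_ode N V u du
    by unfold_locales (use assms(4) \<open>n = Suc N\<close> V_diff in auto)
  have "grad V u0 \<noteq> 0"
    using const_if_equilibrium[OF _ grad_diff assms(7,5,6)] assms(8) by blast
  moreover have "isCont (grad V) u0"
    using grad_diff by (rule differentiable_imp_continuous_within)
  ultimately show ?thesis
    using initial_segment_never_revisited \<open>1 \<le> N\<close> assms(5-7) by blast
qed

end
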